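(* Let $m,t,n$ be positive integers with $mt<n\le 2^m$, let $\alpha=(\alpha_1,\dots,\alpha_n)\in\mathbb{F}_{2^m}^n$ be a support tuple, and for $p\in\mathbb{F}_2^n$ with $0<\mathrm{wt}(p)\le t$, $d\in\mathbb{N}$ with $d<t$ and $\varepsilon\in\mathbb{F}_{2^m}$, let $\tilde p\in\mathbb{F}_2^n$ be defined by $\tilde p_k=1$ if and only if $\varepsilon\alpha_k^d+\prod_{l\in I_p}(\alpha_k-\alpha_l)=0$. (a) Suppose $d=0$ and $p=e^{(i_1)}+e^{(i_2)}$ with $i_1\neq i_2$, and suppose $\mathrm{wt}(\tilde p)=2$, say $I_{\tilde p}=\{j_1,j_2\}$. Then $\alpha_{i_1}+\alpha_{i_2}=\alpha_{j_1}+\alpha_{j_2}$. (b) Suppose $d=2$ and $p=e^{(i)}$ for some $i\in\{1,\dots,n\}$, and suppose $\mathrm{wt}(\tilde p)=2$, say $I_{\tilde p}=\{j_1,j_2\}$. Then $\alpha_i\alpha_{j_1}+\alpha_i\alpha_{j_2}+\alpha_{j_1}\alpha_{j_2}=0$. If, additionally, $\alpha_i\neq 0$, then $\alpha_{j_1}\neq 0$ and $\alpha_{j_2}\neq 0$.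
   Context: $\mathbb{F}_{2^m}$ denotes the finite field with $2^m$ elements. A support tuple is a tuple $\alpha\in\mathbb{F}_{2^m}^n$ with pairwise distinct entries. For $c\in\mathbb{F}_2^n$, $I_c=\{i\mid c_i=1\}$ and $\mathrm{wt}(c)=\#I_c$. $e^{(i)}$ denotes the $i$-th standard basis vector of $\mathbb{F}_2^n$. The vector $\tilde p$ is the output of decoding with the faulty error-locator polynomial $\varepsilon x^d+\prod_{l\in I_p}(x-\alpha_l)$ (its zeros among the $\alpha_k$). *)

theory Defs
  imports Main "HOL-Library.Z2"
begin

text \<open>Vectors in F_2^n are modelled as functions nat => bit, with coordinates
  indexed by 1..n and all other coordinates equal to 0.\<close>

definition vec2 :: "nat \<Rightarrow> (nat \<Rightarrow> bit) \<Rightarrow> bool" where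
  "vec2 n c \<longleftrightarrow> (\<forall>k. k \<notin> {1..n} \<longrightarrow> c k = 0)"

definition supp_idx :: "nat \<Rightarrow> (nat \<Rightarrow> bit) \<Rightarrow> nat set" where
  "supp_idx n c = {i \<in> {1..n}. c i = 1}"

definition wt :: "nat \<Rightarrow> (nat \<Rightarrow> bit) \<Rightarrow> nat" where
  "wt n c = card (supp_idx n c)"

definition unit_vec :: "nat \<Rightarrow> nat \<Rightarrow> bit" where
  "unit_vec i = (\<lambda>k. if k = i then 1 else 0)"

definition support_tuple :: "nat \<Rightarrow> (nat \<Rightarrow> 'a) \<Rightarrow> bool" where
  "support_tuple n \<alpha> \<longleftrightarrow> inj_on \<alpha> {1..n}"

definition faulty_decode ::
  "nat \<Rightarrow> (nat \<Rightarrow> 'a::field) \<Rightarrow> (nat \<Rightarrow> bit) \<Rightarrow> nat \<Rightarrow> 'a \<Rightarrow> nat \<Rightarrow> bit" where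
  "faulty_decode n \<alpha> p d \<epsilon> = (\<lambda>k. if k \<in> {1..n} \<and>
      \<epsilon> * \<alpha> k ^ d + (\<Prod>l\<in>supp_idx n p. \<alpha> k - \<alpha> l) = 0 then 1 else 0)"

end

theory Submission
  imports Defs "HOL-Number_Theory.Residues"
begin

text \<open>The two flipped positions \<open>j\<^sub>1, j\<^sub>2\<close> are distinct roots \<open>x \<noteq> y\<close> of the faulty
  locator, and subtracting the two root equations leaves a factor \<open>x - y\<close> that can be cancelled.
  In (a) this gives \<open>x + y = \<alpha>\<^sub>i\<^sub>1 + \<alpha>\<^sub>i\<^sub>2\<close> at once. In (b) it gives \<open>\<epsilon>(x + y) = -1\<close>, and then
  \<open>\<epsilon>xy = -\<alpha>\<^sub>i\<close>, so \<open>\<epsilon>(\<alpha>\<^sub>i x + \<alpha>\<^sub>i y + xy) = -2\<alpha>\<^sub>i\<close>, which vanishes in characteristic 2.\<close>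

lemma CHAR_eq_if_card_eq_prime_power:
  assumes "prime q" "0 < m" "card (UNIV :: 'a::{field,finite} set) = q ^ m"
  shows "CHAR('a) = q"
proof -
  have "prime CHAR('a)"
    by (intro prime_CHAR_semidom finite_imp_CHAR_pos) simp
  moreover have "CHAR('a) dvd q ^ m"
    using CHAR_dvd_CARD[where 'a='a] assms(3) by simp
  ultimately show ?thesis
    using assms(1) prime_dvd_power primes_dvd_imp_eq by blast
qed

lemma two_eq_zero_if_card_eq_power_two:
  assumes "0 < m" "card (UNIV :: 'a::{field,finite} set) = 2 ^ m"
  shows "(2::'a) = 0"
  using of_nat_CHAR[where 'a='a] CHAR_eq_if_card_eq_prime_power[OF two_is_prime_nat assms]
  by simp

lemma supp_idx_unit_vec:
  assumes "i \<in> {1..n}"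
  shows "supp_idx n (unit_vec i) = {i}"
  using assms by (auto simp: supp_idx_def unit_vec_def)

lemma supp_idx_add_unit_vec:
  assumes "i1 \<in> {1..n}" "i2 \<in> {1..n}" "i1 \<noteq> i2"
  shows "supp_idx n (\<lambda>k. unit_vec i1 k + unit_vec i2 k) = {i1, i2}"
  using assms by (auto simp: supp_idx_def unit_vec_def)

lemma supp_idx_faulty_decode:
  "supp_idx n (faulty_decode n \<alpha> p d \<epsilon>) =
     {k \<in> {1..n}. \<epsilon> * \<alpha> k ^ d + (\<Prod>l\<in>supp_idx n p. \<alpha> k - \<alpha> l) = 0}"
  by (auto simp: supp_idx_def faulty_decode_def)

lemma faulty_decode_weight_two_roots:
  assumes "support_tuple n \<alpha>"
    and "wt n (faulty_decode n \<alpha> p d \<epsilon>) = 2"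
    and "supp_idx n (faulty_decode n \<alpha> p d \<epsilon>) = {j1, j2}"
  shows "\<alpha> j1 \<noteq> \<alpha> j2"
    and "\<epsilon> * \<alpha> j1 ^ d + (\<Prod>l\<in>supp_idx n p. \<alpha> j1 - \<alpha> l) = 0"
    and "\<epsilon> * \<alpha> j2 ^ d + (\<Prod>l\<in>supp_idx n p. \<alpha> j2 - \<alpha> l) = 0"
proof -
  have roots: "{j1, j2} = {k \<in> {1..n}. \<epsilon> * \<alpha> k ^ d + (\<Prod>l\<in>supp_idx n p. \<alpha> k - \<alpha> l) = 0}"
    using assms(3) by (simp add: supp_idx_faulty_decode)
  then show "\<epsilon> * \<alpha> j1 ^ d + (\<Prod>l\<in>supp_idx n p. \<alpha> j1 - \<alpha> l) = 0"
    and "\<epsilon> * \<alpha> j2 ^ d + (\<Prod>l\<in>supp_idx n p. \<alpha> j2 - \<alpha> l) = 0"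
    by blast+
  have "card {j1, j2} = 2"
    using assms(2,3) by (simp add: wt_def)
  then have "j1 \<noteq> j2"
    by auto
  moreover have "j1 \<in> {1..n}" "j2 \<in> {1..n}"
    using roots by blast+
  ultimately show "\<alpha> j1 \<noteq> \<alpha> j2"
    using assms(1) unfolding support_tuple_def inj_on_def by blast
qed

lemma distinct_roots_shifted_product_sum:
  fixes x y a b e :: "'a::field"
  assumes "e + (x - a) * (x - b) = 0" "e + (y - a) * (y - b) = 0" "x \<noteq> y"
  shows "a + b = x + y"
proof -
  have "(x - y) * (x + y - a - b) = (e + (x - a) * (x - b)) - (e + (y - a) * (y - b))"
    by (simp add: algebra_simps)
  then have "(x - y) * (x + y - a - b) = 0"
    using assms(1,2) by simp
  then show ?thesis
    using assms(3) by auto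
qed

lemma distinct_roots_quadratic_char_two:
  fixes x y a e :: "'a::field"
  assumes "e * x ^ 2 + (x - a) = 0" "e * y ^ 2 + (y - a) = 0" "x \<noteq> y" "(2::'a) = 0"
  shows "a * x + a * y + x * y = 0"
proof -
  have "(x - y) * (e * (x + y) + 1) = (e * x ^ 2 + (x - a)) - (e * y ^ 2 + (y - a))"
    by (simp add: algebra_simps power2_eq_square)
  then have "(x - y) * (e * (x + y) + 1) = 0"
    using assms(1,2) by simp
  then have sum: "e * (x + y) = -1"
    using assms(3) by (simp add: eq_neg_iff_add_eq_0)
  have prod: "e * (x * y) = - a"
  proof -
    have "e * (x * y) = x * (e * (x + y)) - e * x ^ 2"
      by (simp add: algebra_simps power2_eq_square)
    also have "\<dots> = - a"
      using sum assms(1) by (simp add: algebra_simps)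
    finally show ?thesis .
  qed
  have "e * (a * x + a * y + x * y) = a * (e * (x + y)) + e * (x * y)"
    by (simp add: algebra_simps)
  also have "\<dots> = - (2 * a)"
    using sum prod by simp
  finally have "e * (a * x + a * y + x * y) = 0"
    using assms(4) by simp
  moreover have "e \<noteq> 0"
    using sum by auto
  ultimately show ?thesis
    by simp
qed

theorem proposition5p2:
  fixes m t n d :: nat
    and \<alpha> :: "nat \<Rightarrow> 'a::{field,finite}"
    and p :: "nat \<Rightarrow> bit"
    and \<epsilon> :: 'a
  assumes "0 < m" "0 < t" "0 < n"
    and "m * t < n" "n \<le> 2 ^ m"
    and "card (UNIV :: 'a set) = 2 ^ m"
    and "support_tuple n \<alpha>"
    and "vec2 n p" "0 < wt n p" "wt n p \<le> t"
    and "d < t"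
  shows
    "(\<forall>i1 i2 j1 j2. d = 0 \<and> i1 \<in> {1..n} \<and> i2 \<in> {1..n} \<and> i1 \<noteq> i2
        \<and> p = (\<lambda>k. unit_vec i1 k + unit_vec i2 k)
        \<and> wt n (faulty_decode n \<alpha> p d \<epsilon>) = 2
        \<and> supp_idx n (faulty_decode n \<alpha> p d \<epsilon>) = {j1, j2}
        \<longrightarrow> \<alpha> i1 + \<alpha> i2 = \<alpha> j1 + \<alpha> j2)
     \<and> (\<forall>i j1 j2. d = 2 \<and> i \<in> {1..n} \<and> p = unit_vec i
        \<and> wt n (faulty_decode n \<alpha> p d \<epsilon>) = 2
        \<and> supp_idx n (faulty_decode n \<alpha> p d \<epsilon>) = {j1, j2}
        \<longrightarrow> \<alpha> i * \<alpha> j1 + \<alpha> i * \<alpha> j2 + \<alpha> j1 * \<alpha> j2 = 0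
            \<and> (\<alpha> i \<noteq> 0 \<longrightarrow> \<alpha> j1 \<noteq> 0 \<and> \<alpha> j2 \<noteq> 0))"
proof (rule conjI; intro allI impI; elim conjE)
  fix i1 i2 j1 j2
  assume "d = 0" "i1 \<in> {1..n}" "i2 \<in> {1..n}" "i1 \<noteq> i2"
    and "p = (\<lambda>k. unit_vec i1 k + unit_vec i2 k)"
    and "wt n (faulty_decode n \<alpha> p d \<epsilon>) = 2" "supp_idx n (faulty_decode n \<alpha> p d \<epsilon>) = {j1, j2}"
  note roots = faulty_decode_weight_two_roots[OF assms(7) this(6,7)]
  have "supp_idx n p = {i1, i2}"
    using supp_idx_add_unit_vec \<open>p = _\<close> \<open>i1 \<in> _\<close> \<open>i2 \<in> _\<close> \<open>i1 \<noteq> i2\<close> by blast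
  then have "\<epsilon> + (\<alpha> j1 - \<alpha> i1) * (\<alpha> j1 - \<alpha> i2) = 0" "\<epsilon> + (\<alpha> j2 - \<alpha> i1) * (\<alpha> j2 - \<alpha> i2) = 0"
    using roots(2,3) \<open>i1 \<noteq> i2\<close> by (simp_all add: \<open>d = 0\<close>)
  then show "\<alpha> i1 + \<alpha> i2 = \<alpha> j1 + \<alpha> j2"
    using distinct_roots_shifted_product_sum roots(1) by blast
next
  fix i j1 j2
  assume "d = 2" "i \<in> {1..n}" "p = unit_vec i"
    and "wt n (faulty_decode n \<alpha> p d \<epsilon>) = 2" "supp_idx n (faulty_decode n \<alpha> p d \<epsilon>) = {j1, j2}"
  note roots = faulty_decode_weight_two_roots[OF assms(7) this(4,5)]
  have "supp_idx n p = {i}"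
    using supp_idx_unit_vec \<open>p = _\<close> \<open>i \<in> _\<close> by blast
  then have "\<epsilon> * \<alpha> j1 ^ 2 + (\<alpha> j1 - \<alpha> i) = 0" "\<epsilon> * \<alpha> j2 ^ 2 + (\<alpha> j2 - \<alpha> i) = 0"
    using roots(2,3) by (simp_all add: \<open>d = 2\<close>)
  then show "\<alpha> i * \<alpha> j1 + \<alpha> i * \<alpha> j2 + \<alpha> j1 * \<alpha> j2 = 0 \<and> (\<alpha> i \<noteq> 0 \<longrightarrow> \<alpha> j1 \<noteq> 0 \<and> \<alpha> j2 \<noteq> 0)"
    using distinct_roots_quadratic_char_two[OF _ _ roots(1) two_eq_zero_if_card_eq_power_two[OF assms(1,6)]]
    by auto
qed

end
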